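(* Let $\omega\ge 2$ and let $\Gamma$ be a finite simple graph that is $\omega$-clique regular, with $m$ cliques of order $\omega$ (so $\Gamma$ has $N=m\binom{\omega}{2}$ edges). Let $\mu_1\le\cdots\le\mu_N$ be the eigenvalues of the adjacency matrix of the line graph $L(\Gamma)$. Then every eigenvalue $\lambda$ of the adjacency matrix of $C_\omega(\Gamma)$ satisfies \[\frac{\omega}{\omega-1}\left(\frac{\mu_1}{2}-\omega+2\right)\le\lambda\le\frac{\omega}{\omega-1}\left(\frac{\mu_N}{2}-\omega+2\right).\]
   Context: A graph is $\omega$-clique regular if it has a nonempty edge set and every edge is contained in exactly one clique of order $\omega$. $L(\Gamma)$ is the line graph (vertices = edges of $\Gamma$, adjacent iff sharing an endpoint). The $\omega$-clique graph $C_\omega(\Gamma)$ has as vertices the cliques of order $\omega$ in $\Gamma$, two distinct ones adjacent iff they have nonempty intersection. *)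

theory Defs
  imports Complex_Main
begin

definition simple_graph :: "'a set \<Rightarrow> 'a set set \<Rightarrow> bool" where
  "simple_graph V E \<longleftrightarrow> finite V \<and> (\<forall>e\<in>E. e \<subseteq> V \<and> card e = 2)"

definition is_clique :: "'a set \<Rightarrow> 'a set set \<Rightarrow> nat \<Rightarrow> 'a set \<Rightarrow> bool" where
  "is_clique V E w K \<longleftrightarrow> K \<subseteq> V \<and> card K = w \<and>
     (\<forall>x\<in>K. \<forall>y\<in>K. x \<noteq> y \<longrightarrow> {x, y} \<in> E)"

definition cliques :: "'a set \<Rightarrow> 'a set set \<Rightarrow> nat \<Rightarrow> 'a set set" where
  "cliques V E w = {K. is_clique V E w K}"

definition clique_regular :: "'a set \<Rightarrow> 'a set set \<Rightarrow> nat \<Rightarrow> bool" where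
  "clique_regular V E w \<longleftrightarrow> E \<noteq> {} \<and>
     (\<forall>e\<in>E. \<exists>!K. is_clique V E w K \<and> e \<subseteq> K)"

definition line_adj :: "'a set \<Rightarrow> 'a set \<Rightarrow> bool" where
  "line_adj e f \<longleftrightarrow> e \<noteq> f \<and> e \<inter> f \<noteq> {}"

definition clique_adj :: "'a set \<Rightarrow> 'a set \<Rightarrow> bool" where
  "clique_adj K L \<longleftrightarrow> K \<noteq> L \<and> K \<inter> L \<noteq> {}"

text \<open>lam is an eigenvalue of the adjacency matrix of the graph with (finite) vertex
  set W and adjacency relation A: there is a nonzero vector f indexed by W with
  A f = lam f.  (The adjacency matrix is real symmetric, so all eigenvalues are real
  and have real eigenvectors.)\<close>
definition adj_eigenvalue :: "'v set \<Rightarrow> ('v \<Rightarrow> 'v \<Rightarrow> bool) \<Rightarrow> real \<Rightarrow> bool" where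
  "adj_eigenvalue W A lam \<longleftrightarrow>
     (\<exists>f :: 'v \<Rightarrow> real. (\<exists>v\<in>W. f v \<noteq> 0) \<and>
        (\<forall>v\<in>W. (\<Sum>u\<in>{u\<in>W. A v u}. f u) = lam * f v))"

definition adj_spectrum :: "'v set \<Rightarrow> ('v \<Rightarrow> 'v \<Rightarrow> bool) \<Rightarrow> real set" where
  "adj_spectrum W A = {lam. adj_eigenvalue W A lam}"

end

theory Submission
  imports Defs "HOL-Analysis.Analysis" "Jordan_Normal_Form.Char_Poly"
begin

(* An eigenvector g of the clique graph is lifted to the edges by f e = g K\<^sub>e, where
  K\<^sub>e is the unique \<omega>-clique containing e.  If N and M are the vertex-edge and vertex-clique
  incidence matrices, then A(L(\<Gamma>)) = N\<^sup>T N - 2 I and A(C\<^sub>\<omega>(\<Gamma>)) = M\<^sup>T M - \<omega> I, and since a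
  clique through a vertex x has \<omega> - 1 edges at x, N f = (\<omega> - 1) M g.  Hence
  f\<^sup>T A(L(\<Gamma>)) f = (\<omega> - 1)((\<omega> - 1)(\<omega> + \<lambda>) - \<omega>) |g|\<^sup>2 and |f|\<^sup>2 = \<omega>(\<omega> - 1)/2 |g|\<^sup>2.  The Rayleigh
  quotient of f lies between the extreme eigenvalues \<mu>\<^sub>1 and \<mu>\<^sub>N of L(\<Gamma>), and solving for \<lambda>
  gives the bounds.  That the extreme eigenvalues bound the Rayleigh quotient is proved directly:
  a maximiser of the quadratic form on the unit sphere is an eigenvector. *)

definition matvec :: "('v \<Rightarrow> 'v \<Rightarrow> real) \<Rightarrow> 'v set \<Rightarrow> ('v \<Rightarrow> real) \<Rightarrow> 'v \<Rightarrow> real" where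
  "matvec a W f v = (\<Sum>u\<in>W. a v u * f u)"

definition dot :: "'v set \<Rightarrow> ('v \<Rightarrow> real) \<Rightarrow> ('v \<Rightarrow> real) \<Rightarrow> real" where
  "dot W f g = (\<Sum>v\<in>W. f v * g v)"

definition is_eigenvector :: "('v \<Rightarrow> 'v \<Rightarrow> real) \<Rightarrow> 'v set \<Rightarrow> real \<Rightarrow> ('v \<Rightarrow> real) \<Rightarrow> bool" where
  "is_eigenvector a W mu f \<longleftrightarrow> (\<exists>v\<in>W. f v \<noteq> 0) \<and> (\<forall>v\<in>W. matvec a W f v = mu * f v)"

definition adj_matrix :: "('v \<Rightarrow> 'v \<Rightarrow> bool) \<Rightarrow> 'v \<Rightarrow> 'v \<Rightarrow> real" where
  "adj_matrix A v u = (if A v u then 1 else 0)"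

lemma adj_eigenvalue_iff:
  assumes "finite W"
  shows "adj_eigenvalue W A mu \<longleftrightarrow> (\<exists>f. is_eigenvector (adj_matrix A) W mu f)"
proof -
  have "matvec (adj_matrix A) W f v = (\<Sum>u\<in>{u\<in>W. A v u}. f u)" for f v
  proof -
    have "matvec (adj_matrix A) W f v = (\<Sum>u\<in>W. if A v u then f u else 0)"
      unfolding matvec_def adj_matrix_def by (intro sum.cong) auto
    also have "\<dots> = (\<Sum>u\<in>{u\<in>W. A v u}. f u)"
      using assms by (rule sum.inter_filter[symmetric])
    finally show ?thesis .
  qed
  then show ?thesis
    unfolding adj_eigenvalue_def is_eigenvector_def by simp
qed

lemma dot_self_nonneg: "0 \<le> dot W f f"
  unfolding dot_def by (simp add: sum_nonneg)

lemma dot_self_eq_0_iff: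
  assumes "finite W"
  shows "dot W f f = 0 \<longleftrightarrow> (\<forall>v\<in>W. f v = 0)"
  using assms unfolding dot_def by (simp add: sum_nonneg_eq_0_iff)

lemma eigenvector_dot_self_pos:
  assumes "finite W" and "is_eigenvector a W mu f"
  shows "0 < dot W f f"
  using assms dot_self_nonneg[of W f] by (auto simp: is_eigenvector_def dot_self_eq_0_iff order_less_le)

lemma dot_matvec_eigenvector:
  assumes "is_eigenvector a W mu f"
  shows "dot W f (matvec a W f) = mu * dot W f f"
  using assms unfolding is_eigenvector_def dot_def
  by (simp add: sum_distrib_left algebra_simps cong: sum.cong)

lemma dot_matvec_symmetric:
  assumes "finite W" and sym: "\<And>u v. u \<in> W \<Longrightarrow> v \<in> W \<Longrightarrow> a u v = a v u"
  shows "dot W f (matvec a W g) = dot W g (matvec a W f)"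
proof -
  have "dot W f (matvec a W g) = (\<Sum>v\<in>W. \<Sum>u\<in>W. f v * a v u * g u)"
    by (simp add: dot_def matvec_def sum_distrib_left mult.assoc)
  also have "\<dots> = (\<Sum>u\<in>W. \<Sum>v\<in>W. g u * a u v * f v)"
    by (subst sum.swap) (auto intro!: sum.cong simp: sym)
  also have "\<dots> = dot W g (matvec a W f)"
    by (simp add: dot_def matvec_def sum_distrib_left mult.assoc)
  finally show ?thesis .
qed

lemma dot_self_add_scaled:
  "dot W (\<lambda>u. f u + t * h u) (\<lambda>u. f u + t * h u) = dot W f f + 2 * t * dot W h f + t\<^sup>2 * dot W h h"
  by (simp add: dot_def power2_eq_square algebra_simps sum.distrib sum_distrib_left)

lemma quad_form_add_scaled:
  assumes "finite W" and "\<And>u v. u \<in> W \<Longrightarrow> v \<in> W \<Longrightarrow> a u v = a v u"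
  shows "dot W (\<lambda>u. f u + t * h u) (matvec a W (\<lambda>u. f u + t * h u))
       = dot W f (matvec a W f) + 2 * t * dot W h (matvec a W f) + t\<^sup>2 * dot W h (matvec a W h)"
proof -
  have "matvec a W (\<lambda>u. f u + t * h u) = (\<lambda>v. matvec a W f v + t * matvec a W h v)"
    by (simp add: fun_eq_iff matvec_def algebra_simps sum.distrib sum_distrib_left)
  then have "dot W (\<lambda>u. f u + t * h u) (matvec a W (\<lambda>u. f u + t * h u))
      = dot W f (matvec a W f) + t * dot W f (matvec a W h) + t * dot W h (matvec a W f)
        + t\<^sup>2 * dot W h (matvec a W h)"
    by (simp add: dot_def power2_eq_square algebra_simps sum.distrib sum_distrib_left)
  moreover have "dot W f (matvec a W h) = dot W h (matvec a W f)"
    using dot_matvec_symmetric assms by blast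
  ultimately show ?thesis
    by simp
qed

lemma quadratic_nonpos_imp_linear_coeff_zero:
  fixes c d :: real
  assumes "\<And>t. 2 * t * c + t\<^sup>2 * d \<le> 0"
  shows "c = 0"
proof -
  define D where "D = \<bar>d\<bar> + 1"
  have "D > 0" and "2 * D + d > 0"
    unfolding D_def by auto
  have "D\<^sup>2 * (2 * (c / D) * c + (c / D)\<^sup>2 * d) = c\<^sup>2 * (2 * D + d)"
    using \<open>D > 0\<close> by (simp add: field_simps power2_eq_square)
  moreover have "D\<^sup>2 * (2 * (c / D) * c + (c / D)\<^sup>2 * d) \<le> 0"
    using assms[of "c / D"] by (simp add: mult_nonneg_nonpos)
  ultimately have "c\<^sup>2 * (2 * D + d) \<le> 0"
    by simp
  with \<open>2 * D + d > 0\<close> show "c = 0"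
    by (simp add: mult_le_0_iff)
qed

lemma rayleigh_maximizer_is_eigenvector:
  assumes "finite W" and sym: "\<And>u v. u \<in> W \<Longrightarrow> v \<in> W \<Longrightarrow> a u v = a v u"
    and bound: "\<And>g. dot W g (matvec a W g) \<le> mu * dot W g g"
    and attained: "dot W f (matvec a W f) = mu * dot W f f"
  shows "\<forall>v\<in>W. matvec a W f v = mu * f v"
proof -
  (* Perturbing f along the residual h = A f - mu f gains 2 t |h|^2 to first order in t,
     which the global bound forces to vanish. *)
  define h where "h v = matvec a W f v - mu * f v" for v
  have residual: "dot W h (matvec a W f) = dot W h h + mu * dot W h f"
    unfolding dot_def sum_distrib_left sum.distrib[symmetric]
    by (rule sum.cong) (simp_all add: h_def algebra_simps)
  have "2 * t * dot W h h + t\<^sup>2 * (dot W h (matvec a W h) - mu * dot W h h) \<le> 0" for t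
  proof -
    have "dot W (\<lambda>u. f u + t * h u) (matvec a W (\<lambda>u. f u + t * h u))
        \<le> mu * dot W (\<lambda>u. f u + t * h u) (\<lambda>u. f u + t * h u)"
      by (rule bound)
    moreover have "dot W (\<lambda>u. f u + t * h u) (matvec a W (\<lambda>u. f u + t * h u))
        = dot W f (matvec a W f) + 2 * t * dot W h (matvec a W f) + t\<^sup>2 * dot W h (matvec a W h)"
      by (rule quad_form_add_scaled[OF assms(1,2)])
    ultimately show ?thesis
      using attained by (simp add: dot_self_add_scaled residual algebra_simps)
  qed
  then have "dot W h h = 0"
    by (rule quadratic_nonpos_imp_linear_coeff_zero)
  then show ?thesis
    using \<open>finite W\<close> by (simp add: dot_self_eq_0_iff h_def)
qed

lemma compact_unit_sphere_on:
  assumes "finite W"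
  shows "compact {f :: 'a \<Rightarrow> real. (\<forall>v. v \<notin> W \<longrightarrow> f v = 0) \<and> dot W f f = 1}" (is "compact ?K")
proof -
  define S where "S = PiE UNIV (\<lambda>v. if v \<in> W then {-1..1} else {0::real})"
  have "?K \<subseteq> S"
  proof
    fix f
    assume f: "f \<in> ?K"
    have "(f v)\<^sup>2 \<le> 1" if "v \<in> W" for v
      using member_le_sum[of v W "\<lambda>v. (f v)\<^sup>2"] that assms f by (simp add: dot_def power2_eq_square)
    then show "f \<in> S"
      using f unfolding S_def PiE_UNIV_domain Pi_iff by (simp add: abs_square_le_1 abs_le_iff)
  qed
  moreover have "f v = 0" if "f \<in> S" and "v \<notin> W" for f v
    using PiE_mem[of f UNIV "\<lambda>v. if v \<in> W then {-1..1} else {0}" v] that unfolding S_def by simp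
  ultimately have "?K = S \<inter> {f. dot W f f = 1}"
    by blast
  have "compactin (product_topology (\<lambda>_. euclidean) UNIV) S"
    unfolding S_def compactin_PiE by auto
  then have "compact S"
    by (simp add: euclidean_product_topology)
  moreover have "continuous_on UNIV (\<lambda>f. dot W f f)"
    unfolding dot_def by (intro continuous_intros continuous_on_product_coordinates)
  then have "closed {f \<in> UNIV. dot W f f = 1}"
    by (rule continuous_closed_preimage_constant) simp
  ultimately show ?thesis
    unfolding \<open>?K = S \<inter> {f. dot W f f = 1}\<close> by (simp add: compact_Int_closed)
qed

lemma exists_max_quad_form_on_unit_sphere:
  assumes "finite W" and "W \<noteq> {}"
  shows "\<exists>f. dot W f f = 1 \<and>
           (\<forall>g. dot W g g = 1 \<longrightarrow> dot W g (matvec a W g) \<le> dot W f (matvec a W f))"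
proof -
  (* The quadratic form only sees values on W, so it is maximised over the functions vanishing
     off W, which form a compact set. *)
  define K where "K = {f :: 'a \<Rightarrow> real. (\<forall>v. v \<notin> W \<longrightarrow> f v = 0) \<and> dot W f f = 1}"
  define restr where "restr g = (\<lambda>v. if v \<in> W then g v else 0)" for g :: "'a \<Rightarrow> real"
  have "matvec a W (restr g) = matvec a W g" for g
    by (auto simp: fun_eq_iff matvec_def restr_def intro!: sum.cong)
  then have same_on_W: "dot W (restr g) (restr g) = dot W g g"
    "dot W (restr g) (matvec a W (restr g)) = dot W g (matvec a W g)" for g
    by (auto simp: dot_def restr_def intro!: sum.cong)
  then have restr_in_K: "restr g \<in> K" if "dot W g g = 1" for g
    using that by (simp add: K_def restr_def)
  obtain v0 where "v0 \<in> W"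
    using assms by blast
  have "(\<Sum>v\<in>W. (if v = v0 then 1 else 0) * (if v = v0 then 1 else 0)) = (\<Sum>v\<in>W. if v = v0 then 1 else (0::real))"
    by (rule sum.cong) auto
  then have "dot W (\<lambda>v. if v = v0 then 1 else 0) (\<lambda>v. if v = v0 then 1 else 0) = 1"
    using \<open>v0 \<in> W\<close> \<open>finite W\<close> by (simp add: dot_def)
  then have "K \<noteq> {}"
    using restr_in_K by blast
  moreover have "continuous_on UNIV (\<lambda>f. dot W f (matvec a W f))"
    unfolding dot_def matvec_def by (intro continuous_intros continuous_on_product_coordinates)
  then have "continuous_on K (\<lambda>f. dot W f (matvec a W f))"
    by (rule continuous_on_subset) simp
  moreover have "compact K"
    unfolding K_def using \<open>finite W\<close> by (rule compact_unit_sphere_on)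
  ultimately obtain f where "f \<in> K"
    and f_max: "\<And>g. g \<in> K \<Longrightarrow> dot W g (matvec a W g) \<le> dot W f (matvec a W f)"
    using continuous_attains_sup[of K] by blast
  show ?thesis
  proof (intro exI conjI allI impI)
    show "dot W f f = 1"
      using \<open>f \<in> K\<close> by (simp add: K_def)
    fix g
    assume "dot W g g = 1"
    then show "dot W g (matvec a W g) \<le> dot W f (matvec a W f)"
      using f_max[OF restr_in_K] same_on_W by simp
  qed
qed

lemma exists_eigenvalue_bounding_quad_form:
  assumes "finite W" and "W \<noteq> {}" and sym: "\<And>u v. u \<in> W \<Longrightarrow> v \<in> W \<Longrightarrow> a u v = a v u"
  shows "\<exists>mu f. is_eigenvector a W mu f \<and> (\<forall>g. dot W g (matvec a W g) \<le> mu * dot W g g)"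
proof -
  obtain f where f_unit: "dot W f f = 1"
    and f_max: "\<And>g. dot W g g = 1 \<Longrightarrow> dot W g (matvec a W g) \<le> dot W f (matvec a W f)"
    using exists_max_quad_form_on_unit_sphere[OF assms(1,2)] by blast
  define mu where "mu = dot W f (matvec a W f)"
  have bound: "dot W g (matvec a W g) \<le> mu * dot W g g" for g
  proof (cases "dot W g g = 0")
    case True
    then have "\<forall>v\<in>W. g v = 0"
      using \<open>finite W\<close> by (simp add: dot_self_eq_0_iff)
    then show ?thesis
      using True by (simp add: dot_def)
  next
    case False
    then have pos: "dot W g g > 0"
      using dot_self_nonneg[of W g] by simp
    define c where "c = 1 / sqrt (dot W g g)"
    have "c\<^sup>2 = 1 / dot W g g"
      using pos by (simp add: c_def power_divide)
    moreover have "dot W (\<lambda>v. c * g v) (\<lambda>v. c * g v) = c\<^sup>2 * dot W g g"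
      and "dot W (\<lambda>v. c * g v) (matvec a W (\<lambda>v. c * g v)) = c\<^sup>2 * dot W g (matvec a W g)"
      by (simp_all add: dot_def matvec_def sum_distrib_left power2_eq_square algebra_simps)
    ultimately have "dot W g (matvec a W g) / dot W g g \<le> mu"
      using f_max[of "\<lambda>v. c * g v"] pos by (simp add: mu_def)
    then show ?thesis
      using pos by (simp add: pos_divide_le_eq)
  qed
  have "\<forall>v\<in>W. matvec a W f v = mu * f v"
    using rayleigh_maximizer_is_eigenvector[OF assms(1) sym bound] f_unit by (simp add: mu_def)
  moreover have "\<exists>v\<in>W. f v \<noteq> 0"
    using f_unit \<open>finite W\<close> dot_self_eq_0_iff[of W f] by auto
  ultimately show ?thesis
    using bound unfolding is_eigenvector_def by blast
qed

lemma is_eigenvector_imp_eigenvalue_mat: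
  assumes h: "bij_betw h {0..<n} W" and "is_eigenvector a W mu f"
  shows "eigenvalue (mat n n (\<lambda>(i, j). a (h i) (h j))) mu"
proof -
  define M where "M = mat n n (\<lambda>(i, j). a (h i) (h j))"
  define x where "x = vec n (\<lambda>i. f (h i))"
  obtain v where v: "v \<in> W" "f v \<noteq> 0" and eig: "\<forall>v\<in>W. matvec a W f v = mu * f v"
    using assms(2) unfolding is_eigenvector_def by blast
  obtain i0 where "i0 < n" "h i0 = v"
    using h v unfolding bij_betw_def by auto
  then have "x \<noteq> 0\<^sub>v n"
    using v by (auto simp: x_def vec_eq_iff)
  moreover have "M *\<^sub>v x = mu \<cdot>\<^sub>v x"
  proof (rule eq_vecI)
    fix i
    assume "i < dim_vec (mu \<cdot>\<^sub>v x)"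
    then have i: "i < n"
      by (simp add: x_def)
    have "(M *\<^sub>v x) $ i = (\<Sum>j\<in>{0..<n}. a (h i) (h j) * f (h j))"
      using i unfolding M_def x_def by (simp add: scalar_prod_def)
    also have "\<dots> = matvec a W f (h i)"
      unfolding matvec_def using sum.reindex_bij_betw[OF h, of "\<lambda>u. a (h i) u * f u"] by simp
    also have "\<dots> = mu * f (h i)"
      using eig h i unfolding bij_betw_def by auto
    finally show "(M *\<^sub>v x) $ i = (mu \<cdot>\<^sub>v x) $ i"
      using i unfolding x_def by simp
  qed (simp add: M_def x_def)
  moreover have "x \<in> carrier_vec n"
    by (simp add: x_def)
  ultimately show ?thesis
    unfolding eigenvalue_def eigenvector_def M_def[symmetric] by (auto simp: M_def)
qed

lemma finite_eigenvalues:
  assumes "finite W"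
  shows "finite {mu. \<exists>f. is_eigenvector a W mu f}"
proof -
  obtain h where h: "bij_betw h {0..<card W} W"
    using ex_bij_betw_nat_finite[OF assms] by blast
  define M where "M = mat (card W) (card W) (\<lambda>(i, j). a (h i) (h j))"
  have M: "M \<in> carrier_mat (card W) (card W)"
    unfolding M_def by simp
  have "char_poly M \<noteq> 0"
    using degree_monic_char_poly[OF M] by (metis coeff_0 zero_neq_one)
  then have "finite {mu. poly (char_poly M) mu = 0}"
    by (rule poly_roots_finite)
  moreover have "{mu. \<exists>f. is_eigenvector a W mu f} \<subseteq> {mu. poly (char_poly M) mu = 0}"
    using is_eigenvector_imp_eigenvalue_mat[OF h] eigenvalue_root_char_poly[OF M]
    unfolding M_def by blast
  ultimately show ?thesis
    by (rule finite_subset[rotated])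
qed

lemma finite_adj_spectrum:
  assumes "finite W"
  shows "finite (adj_spectrum W A)"
  unfolding adj_spectrum_def adj_eigenvalue_iff[OF assms] using finite_eigenvalues[OF assms] by simp

lemma quad_form_le_Max_adj_spectrum:
  assumes "finite W" and "W \<noteq> {}" and sym: "\<And>u v. u \<in> W \<Longrightarrow> v \<in> W \<Longrightarrow> A u v = A v u"
  shows "dot W g (matvec (adj_matrix A) W g) \<le> Max (adj_spectrum W A) * dot W g g"
proof -
  have "\<exists>mu f. is_eigenvector (adj_matrix A) W mu f \<and>
      (\<forall>g. dot W g (matvec (adj_matrix A) W g) \<le> mu * dot W g g)"
    by (rule exists_eigenvalue_bounding_quad_form[OF assms(1,2)]) (simp add: adj_matrix_def sym)
  then obtain mu f where "is_eigenvector (adj_matrix A) W mu f"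
    and bound: "\<And>g. dot W g (matvec (adj_matrix A) W g) \<le> mu * dot W g g"
    by blast
  then have "mu \<in> adj_spectrum W A"
    using adj_eigenvalue_iff[OF assms(1)] by (auto simp: adj_spectrum_def)
  then have "mu \<le> Max (adj_spectrum W A)"
    by (rule Max_ge[OF finite_adj_spectrum[OF assms(1)]])
  then show ?thesis
    using bound[of g] mult_right_mono[OF _ dot_self_nonneg] by (meson order_trans)
qed

lemma matvec_uminus: "matvec (\<lambda>u v. - a u v) W f = (\<lambda>v. - matvec a W f v)"
  by (simp add: fun_eq_iff matvec_def sum_negf)

lemma Min_adj_spectrum_le_quad_form:
  assumes "finite W" and "W \<noteq> {}" and sym: "\<And>u v. u \<in> W \<Longrightarrow> v \<in> W \<Longrightarrow> A u v = A v u"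
  shows "Min (adj_spectrum W A) * dot W g g \<le> dot W g (matvec (adj_matrix A) W g)"
proof -
  have "\<exists>mu f. is_eigenvector (\<lambda>u v. - adj_matrix A u v) W mu f \<and>
      (\<forall>g. dot W g (matvec (\<lambda>u v. - adj_matrix A u v) W g) \<le> mu * dot W g g)"
    by (rule exists_eigenvalue_bounding_quad_form[OF assms(1,2)]) (simp add: adj_matrix_def sym)
  then obtain mu f where "is_eigenvector (\<lambda>u v. - adj_matrix A u v) W mu f"
    and bound: "\<And>g. dot W g (matvec (\<lambda>u v. - adj_matrix A u v) W g) \<le> mu * dot W g g"
    by blast
  then have "is_eigenvector (adj_matrix A) W (- mu) f"
    by (simp add: is_eigenvector_def matvec_uminus minus_equation_iff)
  then have "- mu \<in> adj_spectrum W A"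
    using adj_eigenvalue_iff[OF assms(1)] by (auto simp: adj_spectrum_def)
  then have "Min (adj_spectrum W A) \<le> - mu"
    by (rule Min_le[OF finite_adj_spectrum[OF assms(1)]])
  moreover have "- mu * dot W g g \<le> dot W g (matvec (adj_matrix A) W g)"
    using bound[of g] by (simp add: matvec_uminus dot_def sum_negf)
  ultimately show ?thesis
    using mult_right_mono[OF _ dot_self_nonneg] by (meson order_trans)
qed

lemma sum_incidence_squared:
  fixes F :: "'a set \<Rightarrow> real"
  assumes "finite V" and "finite X" and "\<And>e. e \<in> X \<Longrightarrow> e \<subseteq> V"
  shows "(\<Sum>x\<in>V. (\<Sum>e\<in>{e\<in>X. x \<in> e}. F e)\<^sup>2)
       = (\<Sum>e\<in>X. \<Sum>e'\<in>X. real (card (e \<inter> e')) * F e * F e')"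
proof -
  have "(\<Sum>e\<in>{e\<in>X. x \<in> e}. F e)\<^sup>2 = (\<Sum>e\<in>X. \<Sum>e'\<in>X. if x \<in> e \<inter> e' then F e * F e' else 0)" for x
    unfolding sum.inter_filter[OF \<open>finite X\<close>] power2_eq_square sum_product
    by (intro sum.cong) auto
  then have "(\<Sum>x\<in>V. (\<Sum>e\<in>{e\<in>X. x \<in> e}. F e)\<^sup>2)
      = (\<Sum>e\<in>X. \<Sum>e'\<in>X. \<Sum>x\<in>V. if x \<in> e \<inter> e' then F e * F e' else 0)"
    by (simp add: sum.swap[of _ V] sum.swap[of _ V X])
  also have "\<dots> = (\<Sum>e\<in>X. \<Sum>e'\<in>X. real (card (e \<inter> e')) * F e * F e')"
  proof (intro sum.cong refl)
    fix e e'
    assume "e \<in> X"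
    then have "V \<inter> (e \<inter> e') = e \<inter> e'"
      using assms(3) by blast
    then show "(\<Sum>x\<in>V. if x \<in> e \<inter> e' then F e * F e' else 0) = real (card (e \<inter> e')) * F e * F e'"
      using sum.inter_restrict[OF \<open>finite V\<close>, of "\<lambda>_. F e * F e'" "e \<inter> e'"] by simp
  qed
  finally show ?thesis .
qed

lemma double_sum_eq_quad_form:
  assumes "finite W" and "\<And>u v. u \<in> W \<Longrightarrow> v \<in> W \<Longrightarrow> c u v = a u v + (if u = v then d else 0)"
  shows "(\<Sum>u\<in>W. \<Sum>v\<in>W. c u v * f u * f v) = dot W f (matvec a W f) + d * dot W f f"
proof -
  have "(\<Sum>v\<in>W. c u v * f u * f v) = f u * matvec a W f u + d * (f u * f u)" if "u \<in> W" for u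
  proof -
    have "(\<Sum>v\<in>W. c u v * f u * f v) = (\<Sum>v\<in>W. f u * (a u v * f v) + (if u = v then d * (f u * f v) else 0))"
      using assms(2) that by (intro sum.cong) (simp_all add: algebra_simps)
    then show ?thesis
      using \<open>finite W\<close> that by (simp add: sum.distrib matvec_def sum_distrib_left)
  qed
  then show ?thesis
    by (simp add: dot_def sum.distrib sum_distrib_left cong: sum.cong)
qed

lemma card_Int_doubletons:
  assumes "card e = 2" and "card e' = 2"
  shows "real (card (e \<inter> e')) = adj_matrix line_adj e e' + (if e = e' then 2 else 0)"
proof (cases "e = e'")
  case True
  then show ?thesis
    using assms by (simp add: adj_matrix_def line_adj_def)
next
  case False
  have "finite e" "finite e'"
    using assms by (simp_all add: card_ge_0_finite)
  have "e \<inter> e' \<noteq> e"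
    using False card_subset_eq[OF \<open>finite e'\<close>, of e] assms by auto
  then have "card (e \<inter> e') < 2"
    using psubset_card_mono[OF \<open>finite e\<close>, of "e \<inter> e'"] assms(1) by auto
  then have "card (e \<inter> e') = 0 \<or> card (e \<inter> e') = 1"
    by linarith
  then show ?thesis
    using False \<open>finite e\<close> by (auto simp: adj_matrix_def line_adj_def)
qed

lemma simple_graph_finite_edges:
  assumes "simple_graph V E"
  shows "finite E"
proof -
  have "E \<subseteq> Pow V" and "finite V"
    using assms unfolding simple_graph_def by auto
  then show ?thesis
    by (simp add: finite_subset)
qed

lemma sum_incidence_squared_line_graph:
  assumes "simple_graph V E"
  shows "(\<Sum>x\<in>V. (\<Sum>e\<in>{e\<in>E. x \<in> e}. f e)\<^sup>2)
       = dot E f (matvec (adj_matrix line_adj) E f) + 2 * dot E f f"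
proof -
  have "finite V" and "\<And>e. e \<in> E \<Longrightarrow> e \<subseteq> V \<and> card e = 2"
    using assms unfolding simple_graph_def by auto
  then show ?thesis
    using simple_graph_finite_edges[OF assms]
    by (simp add: sum_incidence_squared double_sum_eq_quad_form card_Int_doubletons)
qed

lemma real_choose_two: "real (n choose 2) = real n * (real n - 1) / 2"
  by (induction n) (simp_all add: numeral_2_eq_2 field_simps)

lemma rayleigh_bound_iff_eigenvalue_bound:
  fixes w mu lam :: real
  assumes "1 < w"
  defines "T \<equiv> w / (w - 1) * (mu / 2 - w + 2)"
  shows "mu * (w * (w - 1) / 2) \<le> (w - 1) * ((w - 1) * (w + lam) - w) \<longleftrightarrow> T \<le> lam"
    and "(w - 1) * ((w - 1) * (w + lam) - w) \<le> mu * (w * (w - 1) / 2) \<longleftrightarrow> lam \<le> T"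
proof -
  have key: "(w - 1) * ((w - 1) * (w + lam) - w) - mu * (w * (w - 1) / 2) = (w - 1)\<^sup>2 * (lam - T)"
    using assms by (simp add: T_def field_simps power2_eq_square)
  have "(w - 1)\<^sup>2 > 0"
    using assms by simp
  then show "mu * (w * (w - 1) / 2) \<le> (w - 1) * ((w - 1) * (w + lam) - w) \<longleftrightarrow> T \<le> lam"
    and "(w - 1) * ((w - 1) * (w + lam) - w) \<le> mu * (w * (w - 1) / 2) \<longleftrightarrow> lam \<le> T"
    using key by (smt (verit) zero_le_mult_iff mult_le_0_iff)+
qed

locale clique_regular_graph =
  fixes V :: "'a set" and E :: "'a set set" and w :: nat
  assumes simple: "simple_graph V E" and regular: "clique_regular V E w"
begin

lemma finite_vertices: "finite V"
  using simple by (simp add: simple_graph_def)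

lemma finite_edges: "finite E"
  using simple by (rule simple_graph_finite_edges)

lemma edge_card: "e \<in> E \<Longrightarrow> card e = 2"
  using simple by (simp add: simple_graph_def)

lemma cliques_iff: "K \<in> cliques V E w \<longleftrightarrow>
    K \<subseteq> V \<and> card K = w \<and> (\<forall>x\<in>K. \<forall>y\<in>K. x \<noteq> y \<longrightarrow> {x, y} \<in> E)"
  by (simp add: cliques_def is_clique_def)

lemma finite_cliques: "finite (cliques V E w)"
proof -
  have "cliques V E w \<subseteq> Pow V"
    by (auto simp: cliques_iff)
  then show ?thesis
    using finite_vertices by (simp add: finite_subset)
qed

lemma finite_clique: "K \<in> cliques V E w \<Longrightarrow> finite K"
  using finite_vertices by (auto simp: cliques_iff intro: finite_subset)

definition clique_of :: "'a set \<Rightarrow> 'a set" where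
  "clique_of e = (THE K. is_clique V E w K \<and> e \<subseteq> K)"

lemma clique_of:
  assumes "e \<in> E"
  shows "clique_of e \<in> cliques V E w" and "e \<subseteq> clique_of e"
  using theI'[of "\<lambda>K. is_clique V E w K \<and> e \<subseteq> K"] regular assms
  by (auto simp: clique_of_def clique_regular_def cliques_def)

lemma clique_of_eqI:
  assumes "e \<in> E" and "K \<in> cliques V E w" and "e \<subseteq> K"
  shows "clique_of e = K"
  using the1_equality[of "\<lambda>K. is_clique V E w K \<and> e \<subseteq> K"] regular assms
  by (auto simp: clique_of_def clique_regular_def cliques_def)

lemma two_le_clique_order: "2 \<le> w"
proof -
  obtain e where "e \<in> E"
    using regular by (auto simp: clique_regular_def)
  then have "card e \<le> card (clique_of e)"
    using clique_of finite_clique by (simp add: card_mono)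
  then show ?thesis
    using \<open>e \<in> E\<close> clique_of(1) edge_card by (simp add: cliques_iff)
qed

lemma edges_of_clique:
  assumes "K \<in> cliques V E w"
  shows "{e\<in>E. clique_of e = K} = {e. e \<subseteq> K \<and> card e = 2}"
proof (intro equalityI subsetI)
  fix e
  assume "e \<in> {e\<in>E. clique_of e = K}"
  then show "e \<in> {e. e \<subseteq> K \<and> card e = 2}"
    using clique_of(2) edge_card by auto
next
  fix e
  assume "e \<in> {e. e \<subseteq> K \<and> card e = 2}"
  then obtain x y where "e = {x, y}" "x \<noteq> y" "x \<in> K" "y \<in> K"
    by (auto simp: card_2_iff)
  then have "e \<in> E"
    using assms by (simp add: cliques_iff)
  then show "e \<in> {e\<in>E. clique_of e = K}"
    using clique_of_eqI assms \<open>e = {x, y}\<close> \<open>x \<in> K\<close> \<open>y \<in> K\<close> by auto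
qed

lemma card_edges_of_clique:
  assumes "K \<in> cliques V E w"
  shows "card {e\<in>E. clique_of e = K} = w choose 2"
  using assms n_subsets[OF finite_clique[OF assms], of 2]
  by (simp add: edges_of_clique cliques_iff)

lemma card_edges_of_clique_containing:
  assumes "K \<in> cliques V E w"
  shows "card {e\<in>E. clique_of e = K \<and> x \<in> e} = (if x \<in> K then w - 1 else 0)"
proof -
  have edges: "{e\<in>E. clique_of e = K \<and> x \<in> e} = {e. e \<subseteq> K \<and> card e = 2 \<and> x \<in> e}"
    using edges_of_clique[OF assms] by blast
  show ?thesis
  proof (cases "x \<in> K")
    case True
    have "{e. e \<subseteq> K \<and> card e = 2 \<and> x \<in> e} = (\<lambda>y. {x, y}) ` (K - {x})"
      using True by (auto simp: card_2_iff image_iff insert_commute)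
    moreover have "inj_on (\<lambda>y. {x, y}) (K - {x})"
      by (auto simp: inj_on_def doubleton_eq_iff)
    ultimately show ?thesis
      using True assms finite_clique[OF assms] edges
      by (simp add: card_image cliques_iff)
  next
    case False
    then have no_edges: "{e. e \<subseteq> K \<and> card e = 2 \<and> x \<in> e} = {}"
      by auto
    show ?thesis
      unfolding edges no_edges using False by simp
  qed
qed

lemma card_Int_cliques_le_1:
  assumes "K \<in> cliques V E w" and "L \<in> cliques V E w" and "K \<noteq> L"
  shows "card (K \<inter> L) \<le> 1"
proof -
  have "x = y" if "x \<in> K \<inter> L" and "y \<in> K \<inter> L" for x y
  proof (rule ccontr)
    assume "x \<noteq> y"
    then have "{x, y} \<in> E"
      using that assms(1) by (simp add: cliques_iff)
    then have "clique_of {x, y} = K" and "clique_of {x, y} = L"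
      using that assms clique_of_eqI by auto
    with \<open>K \<noteq> L\<close> show False
      by simp
  qed
  then show ?thesis
    using card_le_Suc0_iff_eq[of "K \<inter> L"] finite_clique[OF assms(1)] by auto
qed

lemma card_Int_cliques:
  assumes "K \<in> cliques V E w" and "L \<in> cliques V E w"
  shows "real (card (K \<inter> L)) = adj_matrix clique_adj K L + (if K = L then w else 0)"
proof (cases "K = L")
  case True
  then show ?thesis
    using assms by (simp add: adj_matrix_def clique_adj_def cliques_iff)
next
  case False
  then have "card (K \<inter> L) = 0 \<or> card (K \<inter> L) = 1"
    using card_Int_cliques_le_1[OF assms] by linarith
  then show ?thesis
    using False finite_clique[OF assms(1)] by (auto simp: adj_matrix_def clique_adj_def)
qed

lemma sum_incidence_squared_clique_graph:
  "(\<Sum>x\<in>V. (\<Sum>K\<in>{K\<in>cliques V E w. x \<in> K}. g K)\<^sup>2)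
     = dot (cliques V E w) g (matvec (adj_matrix clique_adj) (cliques V E w) g) + w * dot (cliques V E w) g g"
proof -
  have "\<And>K. K \<in> cliques V E w \<Longrightarrow> K \<subseteq> V"
    by (simp add: cliques_iff)
  then show ?thesis
    by (simp add: sum_incidence_squared[OF finite_vertices finite_cliques]
        double_sum_eq_quad_form[OF finite_cliques] card_Int_cliques)
qed

lemma sum_incidence_lift:
  "(\<Sum>e\<in>{e\<in>E. x \<in> e}. g (clique_of e)) = (real w - 1) * (\<Sum>K\<in>{K\<in>cliques V E w. x \<in> K}. g K)"
proof -
  have "clique_of ` {e\<in>E. x \<in> e} \<subseteq> cliques V E w"
    using clique_of(1) by auto
  then have "(\<Sum>e\<in>{e\<in>E. x \<in> e}. g (clique_of e))
      = (\<Sum>K\<in>cliques V E w. \<Sum>e\<in>{e. e \<in> {e\<in>E. x \<in> e} \<and> clique_of e = K}. g (clique_of e))"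
    using finite_edges by (intro sum.group[symmetric, OF _ finite_cliques]) auto
  also have "\<dots> = (\<Sum>K\<in>cliques V E w. \<Sum>e\<in>{e\<in>E. clique_of e = K \<and> x \<in> e}. g K)"
    by (intro sum.cong) auto
  also have "\<dots> = (\<Sum>K\<in>cliques V E w. (real w - 1) * (if x \<in> K then g K else 0))"
    using two_le_clique_order by (intro sum.cong) (simp_all add: card_edges_of_clique_containing of_nat_diff)
  also have "\<dots> = (real w - 1) * (\<Sum>K\<in>{K\<in>cliques V E w. x \<in> K}. g K)"
    using finite_cliques by (simp add: sum_distrib_left sum.inter_filter)
  finally show ?thesis .
qed

lemma dot_lift:
  "dot E (\<lambda>e. g (clique_of e)) (\<lambda>e. g (clique_of e)) = real (w choose 2) * dot (cliques V E w) g g"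
proof -
  have "dot E (\<lambda>e. g (clique_of e)) (\<lambda>e. g (clique_of e))
      = (\<Sum>K\<in>cliques V E w. \<Sum>e\<in>{e\<in>E. clique_of e = K}. g K * g K)"
    unfolding dot_def using finite_edges finite_cliques clique_of(1)
    by (subst sum.group[symmetric, of _ _ clique_of]) (auto intro!: sum.cong)
  also have "\<dots> = real (w choose 2) * dot (cliques V E w) g g"
    by (simp add: card_edges_of_clique dot_def sum_distrib_left)
  finally show ?thesis .
qed

lemma quad_form_line_graph_lift:
  assumes "is_eigenvector (adj_matrix clique_adj) (cliques V E w) lam g"
  defines "f \<equiv> \<lambda>e. g (clique_of e)"
  shows "dot E f (matvec (adj_matrix line_adj) E f)
       = (real w - 1) * ((real w - 1) * (real w + lam) - real w) * dot (cliques V E w) g g"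
proof -
  let ?S = "dot (cliques V E w) g g"
  have "dot E f (matvec (adj_matrix line_adj) E f) = (\<Sum>x\<in>V. (\<Sum>e\<in>{e\<in>E. x \<in> e}. f e)\<^sup>2) - 2 * dot E f f"
    using sum_incidence_squared_line_graph[OF simple] by simp
  also have "(\<Sum>x\<in>V. (\<Sum>e\<in>{e\<in>E. x \<in> e}. f e)\<^sup>2)
      = (real w - 1)\<^sup>2 * (\<Sum>x\<in>V. (\<Sum>K\<in>{K\<in>cliques V E w. x \<in> K}. g K)\<^sup>2)"
    by (simp add: f_def sum_incidence_lift power_mult_distrib sum_distrib_left[symmetric])
  also have "(\<Sum>x\<in>V. (\<Sum>K\<in>{K\<in>cliques V E w. x \<in> K}. g K)\<^sup>2) = (lam + real w) * ?S"
    by (simp add: sum_incidence_squared_clique_graph dot_matvec_eigenvector[OF assms(1)] algebra_simps)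
  also have "dot E f f = real w * (real w - 1) / 2 * ?S"
    by (simp add: f_def dot_lift real_choose_two)
  finally show ?thesis
    by (simp add: power2_eq_square field_simps)
qed

end

theorem theorem7:
  fixes V :: "'a set" and E :: "'a set set" and w :: nat and lam :: real
  assumes "simple_graph V E"
    and "w \<ge> 2"
    and "clique_regular V E w"
    and "adj_eigenvalue (cliques V E w) clique_adj lam"
  shows "real w / (real w - 1) * (Min (adj_spectrum E line_adj) / 2 - real w + 2) \<le> lam
       \<and> lam \<le> real w / (real w - 1) * (Max (adj_spectrum E line_adj) / 2 - real w + 2)"
proof -
  interpret clique_regular_graph V E w
    using assms(1,3) by unfold_locales
  obtain g where g: "is_eigenvector (adj_matrix clique_adj) (cliques V E w) lam g"
    using assms(4) adj_eigenvalue_iff[OF finite_cliques] by blast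
  define f where "f = (\<lambda>e. g (clique_of e))"
  define S where "S = dot (cliques V E w) g g"
  have "S > 0"
    unfolding S_def using finite_cliques g by (rule eigenvector_dot_self_pos)
  have "E \<noteq> {}"
    using assms(3) by (simp add: clique_regular_def)
  have sym: "line_adj e e' = line_adj e' e" if "e \<in> E" and "e' \<in> E" for e e'
    by (auto simp: line_adj_def)
  have "Min (adj_spectrum E line_adj) * dot E f f \<le> dot E f (matvec (adj_matrix line_adj) E f)"
    by (rule Min_adj_spectrum_le_quad_form[OF finite_edges \<open>E \<noteq> {}\<close> sym])
  moreover have "dot E f (matvec (adj_matrix line_adj) E f) \<le> Max (adj_spectrum E line_adj) * dot E f f"
    by (rule quad_form_le_Max_adj_spectrum[OF finite_edges \<open>E \<noteq> {}\<close> sym])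
  moreover have "dot E f (matvec (adj_matrix line_adj) E f) = (real w - 1) * ((real w - 1) * (real w + lam) - real w) * S"
    and "dot E f f = real w * (real w - 1) / 2 * S"
    using quad_form_line_graph_lift[OF g] dot_lift[of g] real_choose_two[of w]
    by (simp_all add: f_def S_def)
  ultimately show ?thesis
    using \<open>S > 0\<close> assms(2) rayleigh_bound_iff_eigenvalue_bound[of "real w"]
    by (simp add: mult.assoc[symmetric] mult_le_cancel_right_pos)
qed

end
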